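(* Suppose that for every $e\in E$ the restriction $p_e|_{K_{i(e)}}$ is Dini-continuous and that there exists $\delta>0$ with $p_e|_{K_{i(e)}}\ge\delta$ for all $e\in E$. Let $x_i,y_i\in K_i$ for all $1\le i\le N$ and let $\nu$ be a Borel probability measure on $K$. Then: (i) the limit $F_{x_1\dots x_N}(\sigma)=\lim_{m\to-\infty}Y^{x_1\dots x_N}_{m0}(\sigma)$ exists for all $\sigma$ outside a set of $\Phi(\nu)$-outer measure zero; (ii) $F_{x_1\dots x_N}=F_{y_1\dots y_N}$ outside a set of $\Phi(\nu)$-outer measure zero; (iii) there exist closed subsets $Q_1\subset Q_2\subset\cdots\subset\Sigma$ with $\lim_{k\to\infty}\Phi(\nu)(\Sigma\setminus Q_k)=0$ and constants $\alpha,C>0$ such that for every $k$ there is $\delta_k>0$ with: $F_{x_1\dots x_N}$ is defined on $Q_k$ and $d(F_{x_1\dots x_N}(\sigma),F_{x_1\dots x_N}(\sigma'))\le C\,d'(\sigma,\sigma')^\alpha$ for all $\sigma,\sigma'\in Q_k$ with $d'(\sigma,\sigma')\le\delta_k$.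
   Context: A contractive Markov system (CMS) with average contracting rate $0<a<1$ consists of: a finite directed multigraph $(V,E,i,t)$ with vertex set $V=\{1,\dots,N\}$, finite edge set $E$, and maps $i,t:E\to V$ giving the initial and terminal vertex of each edge; a complete metric space $(K,d)$ partitioned into non-empty Borel sets $K_1,\dots,K_N$; Borel measurable maps $w_e:K\to K$ ($e\in E$) with $w_e(K_{i(e)})\subset K_{t(e)}$; Borel measurable functions $p_e:K\to[0,\infty)$ with $\sum_{e\in E}p_e(x)=1$ for all $x\in K$ and $p_e=0$ on $K\setminus K_{i(e)}$; and such that $\sum_{e\in E}p_e(x)d(w_ex,w_ey)\leq a\,d(x,y)$ for all $x,y\in K_j$, $j=1,\dots,N$. A function $f:(X,d)\to\mathbb{R}$ is Dini-continuous if $\int_0^c\frac{\phi(t)}{t}dt<\infty$ for some $c>0$, where $\phi(t):=\sup\{|f(x)-f(y)|:d(x,y)\le t,\ x,y\in X\}$. Let $\Sigma:=E^{\mathbb{Z}}$ with metric $d'(\sigma,\sigma'):=(1/2)^k$ where $k$ is the largest integer with $\sigma_j=\sigma'_j$ for all $|j|<k$. For $m\le n$ the cylinder $_m[e_m,\dots,e_n]:=\{\sigma\in\Sigma:\sigma_j=e_j,\ m\le j\le n\}$. For an integer $m\le 1$, $\mathcal{A}_m$ is the $\sigma$-algebra generated by the cylinders $_m[e_m,\dots,e_n]$, $n\ge m$. For $x\in K$, $P^m_x$ is the probability measure on $(\Sigma,\mathcal{A}_m)$ with $P^m_x(_m[e_m,\dots,e_n])=p_{e_m}(x)\,p_{e_{m+1}}(w_{e_m}x)\cdots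 p_{e_n}(w_{e_{n-1}}\circ\cdots\circ w_{e_m}x)$. For a Borel probability measure $\nu$ on $K$, $\Phi_m(\nu)(A)=\int P^m_x(A)\,d\nu(x)$ for $A\in\mathcal{A}_m$. For $B\subset\Sigma$ let $\mathcal{C}(B)$ be the set of sequences $(A_m)_{m\le 0}$ with $A_m\in\mathcal{A}_m$ and $B\subset\bigcup_{m\le 0}A_m$, and $\Phi(\nu)(B):=\inf\{\sum_{m\le 0}\Phi_m(\nu)(A_m):(A_m)_{m\le0}\in\mathcal{C}(B)\}$ (an outer measure on $\Sigma$). For fixed $x_i\in K_i$, $Y^{x_1\dots x_N}_{m0}(\sigma):=w_{\sigma_0}\circ\cdots\circ w_{\sigma_m}(x_{i(\sigma_m)})$ for $m\le 0$, and $F_{x_1\dots x_N}(\sigma):=\lim_{m\to-\infty}Y^{x_1\dots x_N}_{m0}(\sigma)$ wherever this limit exists (the coding map). *)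

theory Defs
  imports "HOL-Probability.Probability"
begin

text \<open>Edges form a finite type 'e (E = UNIV); vertices are 1..N;
  K is the whole complete metric space type 'a, partitioned by Kp 1, ..., Kp N.\<close>

definition cms :: "nat \<Rightarrow> ('e::finite \<Rightarrow> nat) \<Rightarrow> ('e \<Rightarrow> nat) \<Rightarrow> (nat \<Rightarrow> 'a::complete_space set)
   \<Rightarrow> ('e \<Rightarrow> 'a \<Rightarrow> 'a) \<Rightarrow> ('e \<Rightarrow> 'a \<Rightarrow> real) \<Rightarrow> real \<Rightarrow> bool" where
  "cms N ii tt Kp w p a \<longleftrightarrow>
     0 < a \<and> a < 1 \<and>
     (\<forall>e. ii e \<in> {1..N} \<and> tt e \<in> {1..N}) \<and>
     (\<forall>j\<in>{1..N}. Kp j \<noteq> {} \<and> Kp j \<in> sets borel) \<and>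
     (\<forall>j\<in>{1..N}. \<forall>k\<in>{1..N}. j \<noteq> k \<longrightarrow> Kp j \<inter> Kp k = {}) \<and>
     (\<Union>j\<in>{1..N}. Kp j) = UNIV \<and>
     (\<forall>e. w e \<in> borel_measurable borel \<and> w e ` Kp (ii e) \<subseteq> Kp (tt e)) \<and>
     (\<forall>e. p e \<in> borel_measurable borel \<and> (\<forall>x. 0 \<le> p e x) \<and> (\<forall>x. x \<notin> Kp (ii e) \<longrightarrow> p e x = 0)) \<and>
     (\<forall>x. (\<Sum>e\<in>UNIV. p e x) = 1) \<and>
     (\<forall>j\<in>{1..N}. \<forall>x\<in>Kp j. \<forall>y\<in>Kp j. (\<Sum>e\<in>UNIV. p e x * dist (w e x) (w e y)) \<le> a * dist x y)"

definition modcont :: "'a::metric_space set \<Rightarrow> ('a \<Rightarrow> real) \<Rightarrow> real \<Rightarrow> ennreal" where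
  "modcont S f t = (SUP xy \<in> {(x,y). x \<in> S \<and> y \<in> S \<and> dist x y \<le> t}. ennreal \<bar>f (fst xy) - f (snd xy)\<bar>)"

definition dini_continuous_on :: "'a::metric_space set \<Rightarrow> ('a \<Rightarrow> real) \<Rightarrow> bool" where
  "dini_continuous_on S f \<longleftrightarrow>
     (\<exists>c>0. (\<integral>\<^sup>+ t. indicator {0<..c} t * (modcont S f t / ennreal t) \<partial>lborel) < \<infinity>)"

definition dprime :: "(int \<Rightarrow> 'e) \<Rightarrow> (int \<Rightarrow> 'e) \<Rightarrow> real" where
  "dprime s s' = (if s = s' then 0
     else (1/2) ^ (GREATEST k::nat. \<forall>j::int. \<bar>j\<bar> < int k \<longrightarrow> s j = s' j))"

definition dprime_closed :: "(int \<Rightarrow> 'e) set \<Rightarrow> bool" where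
  "dprime_closed Q \<longleftrightarrow>
     (\<forall>s \<sigma>. (\<forall>n. s n \<in> Q) \<longrightarrow> (\<lambda>n. dprime (s n) \<sigma>) \<longlonglongrightarrow> 0 \<longrightarrow> \<sigma> \<in> Q)"

text \<open>Cylinder m[e_m, ..., e_n], with the word e_m..e_n given as a nonempty list.\<close>
definition cyl :: "int \<Rightarrow> 'e list \<Rightarrow> (int \<Rightarrow> 'e) set" where
  "cyl m es = {\<sigma>. \<forall>k<length es. \<sigma> (m + int k) = es ! k}"

definition Asig :: "int \<Rightarrow> (int \<Rightarrow> 'e) set set" where
  "Asig m = sigma_sets UNIV {cyl m es | es. es \<noteq> []}"

fun pweight :: "('e \<Rightarrow> 'a \<Rightarrow> 'a) \<Rightarrow> ('e \<Rightarrow> 'a \<Rightarrow> real) \<Rightarrow> 'e list \<Rightarrow> 'a \<Rightarrow> real" where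
  "pweight w p [] x = 1"
| "pweight w p (e # es) x = p e x * pweight w p es (w e x)"

definition Pm :: "('e \<Rightarrow> 'a \<Rightarrow> 'a) \<Rightarrow> ('e \<Rightarrow> 'a \<Rightarrow> real) \<Rightarrow> int \<Rightarrow> 'a \<Rightarrow> (int \<Rightarrow> 'e) measure" where
  "Pm w p m x = (SOME \<mu>. prob_space \<mu> \<and> space \<mu> = UNIV \<and> sets \<mu> = Asig m \<and>
       (\<forall>es. es \<noteq> [] \<longrightarrow> measure \<mu> (cyl m es) = pweight w p es x))"

definition Phim :: "('e \<Rightarrow> 'a \<Rightarrow> 'a) \<Rightarrow> ('e \<Rightarrow> 'a \<Rightarrow> real) \<Rightarrow> 'a measure \<Rightarrow> int \<Rightarrow> (int \<Rightarrow> 'e) set \<Rightarrow> ennreal" where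
  "Phim w p \<nu> m A = (\<integral>\<^sup>+ x. emeasure (Pm w p m x) A \<partial>\<nu>)"

text \<open>Outer measure Phi(nu); covers (A_m)_{m \<le> 0} are indexed by n with m = -n.\<close>
definition Phi :: "('e \<Rightarrow> 'a \<Rightarrow> 'a) \<Rightarrow> ('e \<Rightarrow> 'a \<Rightarrow> real) \<Rightarrow> 'a measure \<Rightarrow> (int \<Rightarrow> 'e) set \<Rightarrow> ennreal" where
  "Phi w p \<nu> B = (INF A \<in> {A :: nat \<Rightarrow> (int \<Rightarrow> 'e) set. (\<forall>n. A n \<in> Asig (- int n)) \<and> B \<subseteq> (\<Union>n. A n)}.
                    (\<Sum>n. Phim w p \<nu> (- int n) (A n)))"

fun wcomp :: "('e \<Rightarrow> 'a \<Rightarrow> 'a) \<Rightarrow> (int \<Rightarrow> 'e) \<Rightarrow> nat \<Rightarrow> 'a \<Rightarrow> 'a" where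
  "wcomp w s 0 z = w (s 0) z"
| "wcomp w s (Suc n) z = wcomp w s n (w (s (- int (Suc n))) z)"

text \<open>Y^{x_1..x_N}_{m0}(s) with m = -n.\<close>
definition Y :: "('e \<Rightarrow> nat) \<Rightarrow> ('e \<Rightarrow> 'a \<Rightarrow> 'a) \<Rightarrow> (nat \<Rightarrow> 'a) \<Rightarrow> (int \<Rightarrow> 'e) \<Rightarrow> nat \<Rightarrow> 'a" where
  "Y ii w xs s n = wcomp w s n (xs (ii (s (- int n))))"

end

theory Submission
  imports Defs
begin

(*
  Write Y_n for the backward iterate Y^{x_1..x_N}_{-n,0}. Average contractivity bounds the expected
  defect dist(Y^x_{n+1}, Y^x_n) + dist(Y^y_{n+1}, Y^y_n) + dist(Y^x_n, Y^y_n) under the path measure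
  started at level -(g + n + 1) in z by 3 a^(n+1) (a^g d(z) + c), where d(z) is the distance of z to
  the reference point of its part. With beta = sqrt a, Markov's inequality bounds the probability that
  the defect at step n exceeds beta^n by O(beta^n), once the burn-in g is so large that the nu-average
  of the z-dependent term is below beta^n. Taking a strictly increasing burn-in, these events live in
  distinct sigma-algebras A_{-m}, hence form an admissible cover: the set where some defect beyond
  step k is large has Phi(nu)-outer measure O(beta^k). Off this set Y^x and Y^y are geometrically
  Cauchy with a common limit, and since sequences that agree on [-n, n] have the same Y_n, the limit
  is Holder continuous with exponent log_2 (1/beta).
*)

section \<open>Sampling a finite distribution from a uniform variable\<close>

definition finite_enum :: "'e::finite list" where
  "finite_enum = (SOME l. distinct l \<and> set l = UNIV)"

lemma distinct_finite_enum: "distinct (finite_enum :: 'e::finite list)"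
  and set_finite_enum: "set (finite_enum :: 'e::finite list) = UNIV"
proof -
  have "\<exists>l :: 'e list. distinct l \<and> set l = UNIV"
    using finite_distinct_list[OF finite[of "UNIV :: 'e set"]] by blast
  then have "distinct (finite_enum :: 'e list) \<and> set (finite_enum :: 'e list) = UNIV"
    unfolding finite_enum_def by (rule someI_ex)
  then show "distinct (finite_enum :: 'e list)" "set (finite_enum :: 'e list) = UNIV" by auto
qed

definition cum_mass :: "('e::finite \<Rightarrow> real) \<Rightarrow> nat \<Rightarrow> real" where
  "cum_mass q i = (\<Sum>j<i. q (finite_enum ! j))"

text \<open>Inverse-CDF sampling: on \<open>[cum_mass q i, cum_mass q (i+1))\<close> the sample is the \<open>i\<close>-th
  element of \<open>finite_enum\<close>. Counting the crossed thresholds keeps it total and visibly Borel.\<close>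
definition sample :: "('e::finite \<Rightarrow> real) \<Rightarrow> real \<Rightarrow> 'e" where
  "sample q u = finite_enum ! (\<Sum>i<length (finite_enum :: 'e list) - 1. of_bool (cum_mass q (Suc i) \<le> u))"

lemma pred_sample_eq[measurable]: "Measurable.pred borel (\<lambda>u. sample q u = e)"
  unfolding sample_def by measurable

definition uniform01 :: "real measure" where
  "uniform01 = uniform_measure lborel {0..<1}"

lemma prob_space_uniform01: "prob_space uniform01"
  unfolding uniform01_def by (rule prob_space_uniform_measure) auto

lemma sets_uniform01[simp, measurable_cong]: "sets uniform01 = sets borel"
  and space_uniform01[simp]: "space uniform01 = UNIV"
  unfolding uniform01_def by simp_all

context
  fixes q :: "'e::finite \<Rightarrow> real"
  assumes q_nonneg: "\<And>e. 0 \<le> q e" and q_sum: "sum q UNIV = 1"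
begin

lemma cum_mass_mono: "i \<le> j \<Longrightarrow> cum_mass q i \<le> cum_mass q j"
  unfolding cum_mass_def by (rule sum_mono2) (auto simp: q_nonneg)

lemma cum_mass_length: "cum_mass q (length (finite_enum :: 'e list)) = 1"
proof -
  have "cum_mass q (length (finite_enum :: 'e list)) = sum_list (map q (finite_enum :: 'e list))"
    unfolding cum_mass_def by (simp add: sum_list_sum_nth atLeast0LessThan)
  also have "\<dots> = sum q (set finite_enum)"
    by (rule sum_list_distinct_conv_sum_set[OF distinct_finite_enum])
  also have "\<dots> = 1" using q_sum by (simp add: set_finite_enum)
  finally show ?thesis .
qed

lemma sample_eq_nth:
  assumes i: "i < length (finite_enum :: 'e list)" and u: "cum_mass q i \<le> u" "u < cum_mass q (Suc i)"
  shows "sample q u = finite_enum ! i"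
proof -
  let ?n = "length (finite_enum :: 'e list)"
  have "{..<?n - 1} \<inter> {j. cum_mass q (Suc j) \<le> u} = {..<i}"
  proof (intro equalityI subsetI)
    fix j assume "j \<in> {..<?n - 1} \<inter> {j. cum_mass q (Suc j) \<le> u}"
    then have "\<not> Suc i \<le> Suc j" using cum_mass_mono[of "Suc i" "Suc j"] u(2) by auto
    then show "j \<in> {..<i}" by simp
  next
    fix j assume "j \<in> {..<i}"
    then show "j \<in> {..<?n - 1} \<inter> {j. cum_mass q (Suc j) \<le> u}"
      using cum_mass_mono[of "Suc j" i] u(1) i by auto
  qed
  then have "(\<Sum>j<?n - 1. of_bool (cum_mass q (Suc j) \<le> u) :: nat) = i"
    by simp
  then show ?thesis unfolding sample_def by simp
qed

lemma ex_cum_mass_interval: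
  assumes "0 \<le> u" "u < 1"
  shows "\<exists>i<length (finite_enum :: 'e list). cum_mass q i \<le> u \<and> u < cum_mass q (Suc i)"
proof -
  let ?n = "length (finite_enum :: 'e list)" and ?P = "\<lambda>i. u < cum_mass q (Suc i)"
  have "?n \<noteq> 0" using set_finite_enum[where 'e='e] by auto
  then have P: "?P (?n - 1)" using cum_mass_length assms by simp
  define i where "i = (LEAST i. ?P i)"
  have "?P i" unfolding i_def by (rule LeastI[of ?P, OF P])
  moreover have "i < ?n" using Least_le[of ?P, OF P] \<open>?n \<noteq> 0\<close> unfolding i_def by linarith
  moreover have "cum_mass q i \<le> u"
  proof (cases i)
    case 0 then show ?thesis using assms by (simp add: cum_mass_def)
  next
    case (Suc j) then show ?thesis using not_less_Least[of j ?P] unfolding i_def by simp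
  qed
  ultimately show ?thesis by blast
qed

lemma sample_vimage_Ico:
  assumes i: "i < length (finite_enum :: 'e list)"
  shows "{u. sample q u = finite_enum ! i} \<inter> {0..<1} = {cum_mass q i ..< cum_mass q (Suc i)}"
proof (intro equalityI subsetI)
  fix u assume u: "u \<in> {u. sample q u = finite_enum ! i} \<inter> {0..<1}"
  then obtain j where j: "j < length (finite_enum :: 'e list)" "cum_mass q j \<le> u" "u < cum_mass q (Suc j)"
    using ex_cum_mass_interval by auto
  then have "finite_enum ! j = (finite_enum ! i :: 'e)" using sample_eq_nth u by auto
  then have "j = i" using nth_eq_iff_index_eq[OF distinct_finite_enum j(1) i] by simp
  then show "u \<in> {cum_mass q i ..< cum_mass q (Suc i)}" using j by simp
next
  fix u assume u: "u \<in> {cum_mass q i ..< cum_mass q (Suc i)}"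
  have "0 \<le> u" using cum_mass_mono[of 0 i] u by (simp add: cum_mass_def)
  moreover have "cum_mass q (Suc i) \<le> 1"
    using cum_mass_mono[of "Suc i" "length (finite_enum :: 'e list)"] i cum_mass_length by simp
  then have "u < 1" using u by simp
  ultimately show "u \<in> {u. sample q u = finite_enum ! i} \<inter> {0..<1}" using sample_eq_nth[OF i] u by simp
qed

lemma emeasure_sample_eq: "emeasure uniform01 {u. sample q u = e} = q e"
proof -
  obtain i where i: "i < length (finite_enum :: 'e list)" "finite_enum ! i = e"
    using set_finite_enum in_set_conv_nth[of e finite_enum] by auto
  have "emeasure uniform01 {u. sample q u = e} = emeasure lborel ({u. sample q u = e} \<inter> {0..<1})"
    unfolding uniform01_def by (simp add: Int_commute divide_ennreal_def)
  also have "\<dots> = emeasure lborel {cum_mass q i ..< cum_mass q (Suc i)}"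
    using sample_vimage_Ico[OF i(1)] i(2) by simp
  also have "\<dots> = q e"
    using cum_mass_mono[of i "Suc i"] i(2) by (simp add: cum_mass_def)
  finally show ?thesis .
qed

end

section \<open>The path measures \<open>P\<^sup>m\<^sub>x\<close>\<close>

fun sample_path :: "('e::finite \<Rightarrow> 'a \<Rightarrow> 'a) \<Rightarrow> ('e \<Rightarrow> 'a \<Rightarrow> real) \<Rightarrow> 'a \<Rightarrow> real stream \<Rightarrow> nat \<Rightarrow> 'e" where
  "sample_path w p x U 0 = sample (\<lambda>e. p e x) (shd U)"
| "sample_path w p x U (Suc k) = sample_path w p (w (sample (\<lambda>e. p e x) (shd U)) x) (stl U) k"

definition path_prefix_event :: "('e::finite \<Rightarrow> 'a \<Rightarrow> 'a) \<Rightarrow> ('e \<Rightarrow> 'a \<Rightarrow> real) \<Rightarrow> 'a \<Rightarrow> 'e list \<Rightarrow> real stream set"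
  where "path_prefix_event w p x es = {U. \<forall>k<length es. sample_path w p x U k = es ! k}"

lemma path_prefix_event_Nil: "path_prefix_event w p x [] = UNIV"
  by (simp add: path_prefix_event_def)

lemma path_prefix_event_Cons:
  "path_prefix_event w p x (e # es) =
     {U. sample (\<lambda>e. p e x) (shd U) = e \<and> stl U \<in> path_prefix_event w p (w e x) es}"
  by (auto simp: path_prefix_event_def All_less_Suc2)

lemma prob_space_uniform_streams: "prob_space (stream_space uniform01)"
  by (rule prob_space.prob_space_stream_space[OF prob_space_uniform01])

locale prob_weights =
  fixes p :: "'e::finite \<Rightarrow> 'a \<Rightarrow> real"
  assumes p_nonneg: "\<And>e x. 0 \<le> p e x" and p_sum: "\<And>x. (\<Sum>e\<in>UNIV. p e x) = 1"
begin

lemma pweight_nonneg: "0 \<le> pweight w p es x"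
  by (induction es arbitrary: x) (auto simp: p_nonneg)

lemma emeasure_path_prefix_event:
  "path_prefix_event w p x es \<in> sets (stream_space uniform01) \<and>
   emeasure (stream_space uniform01) (path_prefix_event w p x es) = pweight w p es x"
proof (induction es arbitrary: x)
  case Nil
  let ?S = "stream_space uniform01"
  interpret prob_space ?S by (rule prob_space_uniform_streams)
  show ?case using emeasure_space_1 sets.top[of ?S] by (simp add: path_prefix_event_Nil space_stream_space)
next
  case (Cons e es)
  let ?S = "stream_space uniform01" and ?B = "path_prefix_event w p (w e x) es"
  have B[measurable]: "?B \<in> sets ?S" using Cons.IH by blast
  have "Measurable.pred ?S (\<lambda>U. sample (\<lambda>e. p e x) (shd U) = e \<and> stl U \<in> ?B)" by measurable
  then have sets: "path_prefix_event w p x (e # es) \<in> sets ?S"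
    unfolding path_prefix_event_Cons pred_def by (simp add: space_stream_space)
  interpret prob_space uniform01 by (rule prob_space_uniform01)
  have "emeasure ?S (path_prefix_event w p x (e # es)) =
      (\<integral>\<^sup>+u. emeasure ?S {U \<in> space ?S. u ## U \<in> path_prefix_event w p x (e # es)} \<partial>uniform01)"
    by (rule emeasure_stream_space[OF sets])
  also have "\<dots> = (\<integral>\<^sup>+u. emeasure ?S ?B * indicator {u. sample (\<lambda>e. p e x) u = e} u \<partial>uniform01)"
    by (intro nn_integral_cong) (auto simp: path_prefix_event_Cons space_stream_space split: split_indicator)
  also have "\<dots> = emeasure ?S ?B * emeasure uniform01 {u. sample (\<lambda>e. p e x) u = e}"
    by (intro nn_integral_cmult_indicator) simp
  also have "\<dots> = pweight w p (e # es) x"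
    using Cons.IH emeasure_sample_eq[of "\<lambda>e. p e x"] p_nonneg p_sum
    by (simp add: ennreal_mult'' pweight_nonneg mult.commute)
  finally show ?case using sets by simp
qed

text \<open>Coordinates before \<open>m\<close> are junk (\<open>nat\<close> truncates); \<open>Asig m\<close> does not see them.\<close>
definition path_at :: "('e \<Rightarrow> 'a \<Rightarrow> 'a) \<Rightarrow> int \<Rightarrow> 'a \<Rightarrow> real stream \<Rightarrow> int \<Rightarrow> 'e" where
  "path_at w m x U j = sample_path w p x U (nat (j - m))"

lemma ex_path_measure:
  "\<exists>\<mu>. prob_space \<mu> \<and> space \<mu> = UNIV \<and> sets \<mu> = Asig m \<and>
       (\<forall>es. es \<noteq> [] \<longrightarrow> measure \<mu> (cyl m es) = pweight w p es x)"
proof -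
  let ?S = "stream_space uniform01" and ?G = "{cyl m es | es :: 'e list. es \<noteq> []}"
  have vimage: "path_at w m x -` cyl m es \<inter> space ?S = path_prefix_event w p x es" for es
    unfolding cyl_def path_at_def path_prefix_event_def by (auto simp: space_stream_space)
  have meas: "path_at w m x \<in> measurable ?S (sigma UNIV ?G)"
    by (rule measurable_measure_of) (auto simp: vimage emeasure_path_prefix_event)
  interpret prob_space ?S by (rule prob_space_uniform_streams)
  define \<mu> where "\<mu> = distr ?S (sigma UNIV ?G) (path_at w m x)"
  have "measure \<mu> (cyl m es) = pweight w p es x" if "es \<noteq> []" for es
  proof -
    have "cyl m es \<in> sets (sigma UNIV ?G)" using that by auto
    then have "measure \<mu> (cyl m es) = measure ?S (path_prefix_event w p x es)"
      unfolding \<mu>_def by (simp add: measure_distr[OF meas] vimage)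
    also have "\<dots> = pweight w p es x"
      using emeasure_path_prefix_event[of w x es] pweight_nonneg by (simp add: measure_def)
    finally show ?thesis .
  qed
  moreover have "prob_space \<mu>" unfolding \<mu>_def by (rule prob_space_distr[OF meas])
  ultimately show ?thesis unfolding \<mu>_def Asig_def by auto
qed

lemma prob_space_Pm: "prob_space (Pm w p m x)"
  and sets_Pm: "sets (Pm w p m x) = Asig m"
  and measure_Pm_cyl: "es \<noteq> [] \<Longrightarrow> measure (Pm w p m x) (cyl m es) = pweight w p es x"
  using someI_ex[OF ex_path_measure[of m w x]] unfolding Pm_def[symmetric] by auto

end

definition words :: "nat \<Rightarrow> 'e list set" where
  "words k = {es. length es = k}"

definition path_expect :: "('e \<Rightarrow> 'a \<Rightarrow> 'a) \<Rightarrow> ('e \<Rightarrow> 'a \<Rightarrow> real) \<Rightarrow> nat \<Rightarrow> 'a \<Rightarrow> ('e list \<Rightarrow> real) \<Rightarrow> real"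
  where "path_expect w p k x f = (\<Sum>es\<in>words k. pweight w p es x * f es)"

definition apply_word :: "('e \<Rightarrow> 'a \<Rightarrow> 'a) \<Rightarrow> 'e list \<Rightarrow> 'a \<Rightarrow> 'a" where
  "apply_word w vs z = foldl (\<lambda>z e. w e z) z vs"

lemma apply_word_Nil[simp]: "apply_word w [] z = z"
  and apply_word_Cons[simp]: "apply_word w (e # vs) z = apply_word w vs (w e z)"
  and apply_word_append[simp]: "apply_word w (us @ vs) z = apply_word w vs (apply_word w us z)"
  by (simp_all add: apply_word_def)

lemma words_0: "words 0 = {[]}"
  by (auto simp: words_def)

lemma words_Suc: "words (Suc k) = (\<lambda>(e, vs). e # vs) ` (UNIV \<times> words k)"
  by (auto simp: words_def length_Suc_conv)

lemma finite_words: "finite (words k :: 'e::finite list set)"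
  by (induction k) (auto simp: words_0 words_Suc)

lemma path_expect_0: "path_expect w p 0 x f = f []"
  by (simp add: path_expect_def words_0)

lemma path_expect_Suc:
  "path_expect w p (Suc k) x f = (\<Sum>e\<in>UNIV. p e x * path_expect w p k (w e x) (\<lambda>vs. f (e # vs)))"
proof -
  have inj: "inj_on (\<lambda>(e, vs). e # vs) (UNIV \<times> words k)" by (auto simp: inj_on_def)
  have "path_expect w p (Suc k) x f = (\<Sum>(e, vs)\<in>UNIV \<times> words k. pweight w p (e # vs) x * f (e # vs))"
    unfolding path_expect_def words_Suc by (subst sum.reindex[OF inj]) (simp add: case_prod_beta)
  also have "\<dots> = (\<Sum>e\<in>UNIV. \<Sum>vs\<in>words k. pweight w p (e # vs) x * f (e # vs))"
    by (rule sum.cartesian_product[symmetric])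
  also have "\<dots> = (\<Sum>e\<in>UNIV. p e x * path_expect w p k (w e x) (\<lambda>vs. f (e # vs)))"
    unfolding path_expect_def by (simp add: sum_distrib_left mult.assoc)
  finally show ?thesis .
qed

lemma path_expect_append:
  "path_expect w p (g + k) x f =
     path_expect w p g x (\<lambda>us. path_expect w p k (apply_word w us x) (\<lambda>vs. f (us @ vs)))"
  by (induction g arbitrary: x f) (simp_all add: path_expect_0 path_expect_Suc)

lemma path_expect_add:
  "path_expect w p k x (\<lambda>es. f es + h es) = path_expect w p k x f + path_expect w p k x h"
  unfolding path_expect_def by (simp add: distrib_left sum.distrib)

lemma path_expect_cmult: "path_expect w p k x (\<lambda>es. c * f es) = c * path_expect w p k x f"
  unfolding path_expect_def by (simp add: sum_distrib_left mult.left_commute)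

context prob_weights
begin

lemma p_le_1: "p e x \<le> 1"
proof -
  have "p e x \<le> (\<Sum>e\<in>UNIV. p e x)" by (rule member_le_sum) (auto simp: p_nonneg)
  then show ?thesis using p_sum by simp
qed

lemma path_expect_mono:
  assumes "\<And>es. length es = k \<Longrightarrow> pweight w p es x \<noteq> 0 \<Longrightarrow> f es \<le> h es"
  shows "path_expect w p k x f \<le> path_expect w p k x h"
  unfolding path_expect_def
proof (rule sum_mono)
  fix es :: "'e list" assume "es \<in> words k"
  then show "pweight w p es x * f es \<le> pweight w p es x * h es"
    using assms[of es] pweight_nonneg[of w es x]
    by (cases "pweight w p es x = 0") (auto simp: words_def intro: mult_left_mono)
qed

lemma path_expect_const: "path_expect w p k x (\<lambda>_. c) = c"
proof -
  have "path_expect w p k x (\<lambda>_. 1) = 1"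
    by (induction k arbitrary: x) (simp_all add: path_expect_0 path_expect_Suc p_sum)
  then show ?thesis using path_expect_cmult[of w p k x c "\<lambda>_. 1"] by simp
qed

lemma path_expect_Markov_inequality:
  assumes r: "0 < r" and D: "\<And>es. 0 \<le> D es"
  shows "(\<Sum>es\<in>{es\<in>words k. r < D es}. pweight w p es x) \<le> path_expect w p k x D / r"
proof -
  have "(\<Sum>es\<in>{es\<in>words k. r < D es}. pweight w p es x) =
      (\<Sum>es\<in>words k. if r < D es then pweight w p es x else 0)"
    by (rule sum.inter_filter[OF finite_words])
  also have "\<dots> \<le> (\<Sum>es\<in>words k. pweight w p es x * D es / r)"
  proof (rule sum_mono)
    fix es
    have "pweight w p es x * 1 \<le> pweight w p es x * (D es / r)" if "r < D es"
      using that r pweight_nonneg[of w es x] by (intro mult_left_mono) auto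
    then show "(if r < D es then pweight w p es x else 0) \<le> pweight w p es x * D es / r"
      using r D[of es] pweight_nonneg[of w es x] by auto
  qed
  also have "\<dots> = path_expect w p k x D / r"
    unfolding path_expect_def by (simp add: sum_divide_distrib)
  finally show ?thesis .
qed

end

section \<open>Average contraction estimates\<close>

locale cms_system =
  fixes N :: nat and ii tt :: "'e::finite \<Rightarrow> nat" and Kp :: "nat \<Rightarrow> 'a::complete_space set"
    and w :: "'e \<Rightarrow> 'a \<Rightarrow> 'a" and p :: "'e \<Rightarrow> 'a \<Rightarrow> real" and a :: real
  assumes cms: "cms N ii tt Kp w p a"
begin

lemma a_pos: "0 < a" and a_less_1: "a < 1"
  using cms unfolding cms_def by auto

lemma ii_in: "ii e \<in> {1..N}" and tt_in: "tt e \<in> {1..N}"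
  using cms unfolding cms_def by auto

lemma Kp_disjoint: "j \<in> {1..N} \<Longrightarrow> k \<in> {1..N} \<Longrightarrow> j \<noteq> k \<Longrightarrow> Kp j \<inter> Kp k = {}"
  using cms unfolding cms_def by auto

lemma Kp_borel: "j \<in> {1..N} \<Longrightarrow> Kp j \<in> sets borel"
  using cms unfolding cms_def by auto

lemma w_into: "y \<in> Kp (ii e) \<Longrightarrow> w e y \<in> Kp (tt e)"
  using cms unfolding cms_def by blast

lemma p_outside: "y \<notin> Kp (ii e) \<Longrightarrow> p e y = 0"
  using cms unfolding cms_def by auto

lemma average_contraction:
  "j \<in> {1..N} \<Longrightarrow> x \<in> Kp j \<Longrightarrow> y \<in> Kp j \<Longrightarrow>
     (\<Sum>e\<in>UNIV. p e x * dist (w e x) (w e y)) \<le> a * dist x y"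
  using cms unfolding cms_def by auto

lemma Kp_cover: "\<exists>j\<in>{1..N}. y \<in> Kp j"
proof -
  have "(\<Union>j\<in>{1..N}. Kp j) = UNIV" using cms unfolding cms_def by auto
  then show ?thesis by blast
qed

sublocale prob_weights p
proof
  show "0 \<le> p e x" "(\<Sum>e\<in>UNIV. p e x) = 1" for e x using cms unfolding cms_def by auto
qed

lemma ii_eq_if_p_nonzero: "j \<in> {1..N} \<Longrightarrow> y \<in> Kp j \<Longrightarrow> p e y \<noteq> 0 \<Longrightarrow> ii e = j"
  using p_outside[of y e] Kp_disjoint[of j "ii e"] ii_in[of e] by blast

lemma path_expect_dist_apply_word_le:
  "j \<in> {1..N} \<Longrightarrow> z \<in> Kp j \<Longrightarrow> u \<in> Kp j \<Longrightarrow>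
   path_expect w p k z (\<lambda>vs. dist (apply_word w vs z) (apply_word w vs u)) \<le> a ^ k * dist z u"
proof (induction k arbitrary: j z u)
  case 0 then show ?case by (simp add: path_expect_0)
next
  case (Suc k)
  have "p e z * path_expect w p k (w e z) (\<lambda>vs. dist (apply_word w vs (w e z)) (apply_word w vs (w e u)))
        \<le> p e z * (a ^ k * dist (w e z) (w e u))" for e
  proof (cases "p e z = 0")
    case False
    then have "ii e = j" using ii_eq_if_p_nonzero Suc.prems by blast
    then have "w e z \<in> Kp (tt e)" "w e u \<in> Kp (tt e)" using w_into Suc.prems by auto
    then show ?thesis using Suc.IH[OF tt_in] p_nonneg by (intro mult_left_mono) auto
  qed simp
  then have "path_expect w p (Suc k) z (\<lambda>vs. dist (apply_word w vs z) (apply_word w vs u))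
      \<le> a ^ k * (\<Sum>e\<in>UNIV. p e z * dist (w e z) (w e u))"
    by (simp add: path_expect_Suc sum_distrib_left mult.left_commute sum_mono)
  also have "\<dots> \<le> a ^ k * (a * dist z u)"
    using average_contraction[OF Suc.prems] a_pos by (intro mult_left_mono) auto
  finally show ?case by (simp add: algebra_simps)
qed

definition ref_dist :: "(nat \<Rightarrow> 'a) \<Rightarrow> 'a \<Rightarrow> real" where
  "ref_dist zs y = (\<Sum>j\<in>{1..N}. indicator (Kp j) y * dist y (zs j))"

definition ref_shift :: "(nat \<Rightarrow> 'a) \<Rightarrow> real" where
  "ref_shift zs = (\<Sum>e\<in>UNIV. dist (w e (zs (ii e))) (zs (tt e)))"

lemma ref_dist_nonneg: "0 \<le> ref_dist zs y"
  unfolding ref_dist_def by (simp add: sum_nonneg)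

lemma ref_shift_nonneg: "0 \<le> ref_shift zs"
  unfolding ref_shift_def by (simp add: sum_nonneg)

lemma ref_dist_eq:
  assumes j: "j \<in> {1..N}" "y \<in> Kp j"
  shows "ref_dist zs y = dist y (zs j)"
proof -
  have "indicator (Kp i) y * dist y (zs i) = (if i = j then dist y (zs j) else 0)" if "i \<in> {1..N}" for i
    using Kp_disjoint[OF that j(1)] j(2) by (auto split: split_indicator)
  then have "ref_dist zs y = (\<Sum>i\<in>{1..N}. if i = j then dist y (zs j) else 0)"
    unfolding ref_dist_def by (intro sum.cong) auto
  then show ?thesis using j(1) by simp
qed

lemma ref_dist_image:
  assumes "p e y \<noteq> 0"
  shows "ref_dist zs (w e y) = dist (w e y) (zs (tt e))"
  using assms p_outside w_into tt_in ref_dist_eq by blast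

lemma sum_p_ref_dist_image_le:
  assumes zs: "\<forall>i\<in>{1..N}. zs i \<in> Kp i"
  shows "(\<Sum>e\<in>UNIV. p e y * ref_dist zs (w e y)) \<le> a * ref_dist zs y + ref_shift zs"
proof -
  obtain j where j: "j \<in> {1..N}" "y \<in> Kp j" using Kp_cover by blast
  have "p e y * ref_dist zs (w e y)
      \<le> p e y * dist (w e y) (w e (zs j)) + dist (w e (zs (ii e))) (zs (tt e))" for e
  proof (cases "p e y = 0")
    case False
    then have "ii e = j" using ii_eq_if_p_nonzero j by blast
    then have "p e y * ref_dist zs (w e y)
        \<le> p e y * dist (w e y) (w e (zs j)) + p e y * dist (w e (zs (ii e))) (zs (tt e))"
      using ref_dist_image[OF False] dist_triangle[of "w e y" "zs (tt e)" "w e (zs j)"] p_nonneg[of e y]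
      by (simp add: distrib_left[symmetric] mult_left_mono)
    moreover have "p e y * dist (w e (zs (ii e))) (zs (tt e)) \<le> dist (w e (zs (ii e))) (zs (tt e))"
      by (rule mult_left_le_one_le) (simp_all add: p_le_1 p_nonneg)
    ultimately show ?thesis by linarith
  qed simp
  then have "(\<Sum>e\<in>UNIV. p e y * ref_dist zs (w e y))
      \<le> (\<Sum>e\<in>UNIV. p e y * dist (w e y) (w e (zs j))) + ref_shift zs"
    unfolding ref_shift_def by (simp add: sum.distrib[symmetric] sum_mono)
  also have "\<dots> \<le> a * ref_dist zs y + ref_shift zs"
    using average_contraction[OF j] zs j ref_dist_eq[OF j] by auto
  finally show ?thesis .
qed

lemma path_expect_ref_dist_le:
  assumes zs: "\<forall>i\<in>{1..N}. zs i \<in> Kp i"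
  shows "path_expect w p g x (\<lambda>us. ref_dist zs (apply_word w us x))
           \<le> a ^ g * ref_dist zs x + ref_shift zs * (\<Sum>i<g. a ^ i)"
proof (induction g arbitrary: x)
  case 0 then show ?case by (simp add: path_expect_0)
next
  case (Suc g)
  let ?D = "ref_dist zs" and ?c = "ref_shift zs" and ?S = "\<Sum>i<g. a ^ i"
  have "path_expect w p (Suc g) x (\<lambda>us. ?D (apply_word w us x)) \<le> (\<Sum>e\<in>UNIV. p e x * (a ^ g * ?D (w e x) + ?c * ?S))"
    unfolding path_expect_Suc using Suc.IH by (intro sum_mono mult_left_mono p_nonneg) auto
  also have "\<dots> = a ^ g * (\<Sum>e\<in>UNIV. p e x * ?D (w e x)) + ?c * ?S * (\<Sum>e\<in>UNIV. p e x)"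
    by (simp add: sum.distrib sum_distrib_left algebra_simps)
  also have "\<dots> = a ^ g * (\<Sum>e\<in>UNIV. p e x * ?D (w e x)) + ?c * ?S"
    by (simp add: p_sum)
  also have "\<dots> \<le> a ^ g * (a * ?D x + ?c) + ?c * ?S"
    using sum_p_ref_dist_image_le[OF zs, of x] a_pos by (intro add_right_mono mult_left_mono) auto
  also have "\<dots> = a ^ Suc g * ?D x + ?c * (\<Sum>i<Suc g. a ^ i)"
    by (simp add: algebra_simps)
  finally show ?case .
qed

lemma sum_p_dist_image_ref_le:
  assumes zs: "\<forall>i\<in>{1..N}. zs i \<in> Kp i"
  shows "(\<Sum>e\<in>UNIV. p e z * dist (w e z) (w e (zs (ii e)))) \<le> ref_dist zs z"
proof -
  obtain j where j: "j \<in> {1..N}" "z \<in> Kp j" using Kp_cover by blast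
  have "(\<Sum>e\<in>UNIV. p e z * dist (w e z) (w e (zs (ii e)))) = (\<Sum>e\<in>UNIV. p e z * dist (w e z) (w e (zs j)))"
    using ii_eq_if_p_nonzero[OF j] by (intro sum.cong) auto
  also have "\<dots> \<le> a * dist z (zs j)" using average_contraction[OF j] zs j(1) by auto
  also have "\<dots> \<le> ref_dist zs z" using a_less_1 a_pos ref_dist_eq[OF j] by (simp add: mult_left_le_one_le)
  finally show ?thesis .
qed

lemma sum_p_dist_image_target_le:
  assumes zs: "\<forall>i\<in>{1..N}. zs i \<in> Kp i"
  shows "(\<Sum>e\<in>UNIV. p e z * dist (w e z) (zs (tt e))) \<le> ref_dist zs z + ref_shift zs"
proof -
  have "(\<Sum>e\<in>UNIV. p e z * dist (w e z) (zs (tt e))) = (\<Sum>e\<in>UNIV. p e z * ref_dist zs (w e z))"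
    by (intro sum.cong refl) (metis ref_dist_image mult_zero_left)
  also have "\<dots> \<le> a * ref_dist zs z + ref_shift zs" by (rule sum_p_ref_dist_image_le[OF zs])
  also have "\<dots> \<le> ref_dist zs z + ref_shift zs"
    using a_less_1 a_pos ref_dist_nonneg[of zs z] by (simp add: mult_left_le_one_le)
  finally show ?thesis .
qed

text \<open>Finite-word versions of \<open>Y\<close>: the word lists the edges from the oldest one, whose initial
  vertex selects the starting point.\<close>
definition Y_word :: "(nat \<Rightarrow> 'a) \<Rightarrow> 'e list \<Rightarrow> 'a" where
  "Y_word zs vs = apply_word w vs (zs (ii (hd vs)))"

definition defect :: "(nat \<Rightarrow> 'a) \<Rightarrow> (nat \<Rightarrow> 'a) \<Rightarrow> 'e list \<Rightarrow> real" where
  "defect xs ys vs = dist (Y_word xs vs) (Y_word xs (tl vs)) + dist (Y_word ys vs) (Y_word ys (tl vs))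
      + dist (Y_word xs (tl vs)) (Y_word ys (tl vs))"

lemma defect_nonneg: "0 \<le> defect xs ys vs"
  unfolding defect_def by simp

lemma defect_Cons_le:
  assumes "vs \<noteq> []" "ii (hd vs) = tt e"
  shows "defect xs ys (e # vs) \<le>
    dist (apply_word w vs z) (apply_word w vs (w e (xs (ii e))))
    + dist (apply_word w vs z) (apply_word w vs (w e (ys (ii e))))
    + 2 * dist (apply_word w vs z) (apply_word w vs (xs (tt e)))
    + 2 * dist (apply_word w vs z) (apply_word w vs (ys (tt e)))"
proof -
  let ?W = "apply_word w vs"
  have "defect xs ys (e # vs) = dist (?W (w e (xs (ii e)))) (?W (xs (tt e)))
      + dist (?W (w e (ys (ii e)))) (?W (ys (tt e))) + dist (?W (xs (tt e))) (?W (ys (tt e)))"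
    using assms unfolding defect_def Y_word_def by simp
  then show ?thesis
    using dist_triangle3[of "?W (w e (xs (ii e)))" "?W (xs (tt e))" "?W z"]
      dist_triangle3[of "?W (w e (ys (ii e)))" "?W (ys (tt e))" "?W z"]
      dist_triangle3[of "?W (xs (tt e))" "?W (ys (tt e))" "?W z"]
    by linarith
qed

lemma path_expect_defect_Cons_le:
  assumes xs: "\<forall>i\<in>{1..N}. xs i \<in> Kp i" and ys: "\<forall>i\<in>{1..N}. ys i \<in> Kp i" and pe: "p e z \<noteq> 0"
  shows "path_expect w p (Suc n) (w e z) (\<lambda>vs. defect xs ys (e # vs)) \<le>
     a ^ Suc n * (dist (w e z) (w e (xs (ii e))) + dist (w e z) (w e (ys (ii e)))
        + 2 * dist (w e z) (xs (tt e)) + 2 * dist (w e z) (ys (tt e)))"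
proof -
  let ?t = "tt e" and ?z = "w e z" and ?u = "w e (xs (ii e))" and ?v = "w e (ys (ii e))"
  let ?E = "\<lambda>y. path_expect w p (Suc n) ?z (\<lambda>vs. dist (apply_word w vs ?z) (apply_word w vs y))"
  have z: "?z \<in> Kp ?t" using w_into p_outside pe by blast
  have in_t: "?u \<in> Kp ?t" "?v \<in> Kp ?t" "xs ?t \<in> Kp ?t" "ys ?t \<in> Kp ?t"
    using w_into xs ys ii_in tt_in by blast+
  let ?G = "\<lambda>vs. dist (apply_word w vs ?z) (apply_word w vs ?u)
        + dist (apply_word w vs ?z) (apply_word w vs ?v) + 2 * dist (apply_word w vs ?z) (apply_word w vs (xs ?t))
        + 2 * dist (apply_word w vs ?z) (apply_word w vs (ys ?t))"
  have "path_expect w p (Suc n) ?z (\<lambda>vs. defect xs ys (e # vs)) \<le> path_expect w p (Suc n) ?z ?G"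
  proof (rule path_expect_mono)
    fix vs :: "'e list" assume "length vs = Suc n" "pweight w p vs ?z \<noteq> 0"
    then obtain v vs' where "vs = v # vs'" "p v ?z \<noteq> 0" by (cases vs) auto
    then have "vs \<noteq> []" "ii (hd vs) = ?t" using ii_eq_if_p_nonzero[OF tt_in z] by auto
    then show "defect xs ys (e # vs) \<le> ?G vs" by (rule defect_Cons_le)
  qed
  also have "\<dots> = ?E ?u + ?E ?v + 2 * ?E (xs ?t) + 2 * ?E (ys ?t)"
    by (simp add: path_expect_add path_expect_cmult)
  also have "\<dots> \<le> a ^ Suc n * (dist ?z ?u + dist ?z ?v + 2 * dist ?z (xs ?t) + 2 * dist ?z (ys ?t))"
    using in_t[THEN path_expect_dist_apply_word_le[OF tt_in z, of _ "Suc n"]]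
    by (simp add: algebra_simps)
  finally show ?thesis .
qed

lemma path_expect_defect_le:
  assumes xs: "\<forall>i\<in>{1..N}. xs i \<in> Kp i" and ys: "\<forall>i\<in>{1..N}. ys i \<in> Kp i"
  shows "path_expect w p (Suc (Suc n)) z (defect xs ys) \<le>
     3 * a ^ Suc n * (ref_dist xs z + ref_dist ys z + ref_shift xs + ref_shift ys)"
proof -
  let ?A = "\<lambda>e. dist (w e z) (w e (xs (ii e)))" and ?B = "\<lambda>e. dist (w e z) (w e (ys (ii e)))"
  let ?C = "\<lambda>e. dist (w e z) (xs (tt e))" and ?D = "\<lambda>e. dist (w e z) (ys (tt e))"
  have "p e z * path_expect w p (Suc n) (w e z) (\<lambda>vs. defect xs ys (e # vs))
      \<le> p e z * (a ^ Suc n * (?A e + ?B e + 2 * ?C e + 2 * ?D e))" for e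
    using path_expect_defect_Cons_le[OF xs ys, of e z n] p_nonneg[of e z]
    by (cases "p e z = 0") (auto intro: mult_left_mono)
  then have "path_expect w p (Suc (Suc n)) z (defect xs ys)
      \<le> (\<Sum>e\<in>UNIV. p e z * (a ^ Suc n * (?A e + ?B e + 2 * ?C e + 2 * ?D e)))"
    unfolding path_expect_Suc[of _ _ "Suc n"] by (rule sum_mono)
  also have "\<dots> = a ^ Suc n * ((\<Sum>e\<in>UNIV. p e z * ?A e) + (\<Sum>e\<in>UNIV. p e z * ?B e)
          + 2 * (\<Sum>e\<in>UNIV. p e z * ?C e) + 2 * (\<Sum>e\<in>UNIV. p e z * ?D e))"
    by (simp add: sum.distrib sum_distrib_left algebra_simps)
  also have "\<dots> \<le> a ^ Suc n * (ref_dist xs z + ref_dist ys z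
      + 2 * (ref_dist xs z + ref_shift xs) + 2 * (ref_dist ys z + ref_shift ys))"
    using sum_p_dist_image_ref_le[OF xs, of z] sum_p_dist_image_ref_le[OF ys, of z]
      sum_p_dist_image_target_le[OF xs, of z] sum_p_dist_image_target_le[OF ys, of z] a_pos
    by (intro mult_left_mono) auto
  also have "\<dots> \<le> 3 * a ^ Suc n * (ref_dist xs z + ref_dist ys z + ref_shift xs + ref_shift ys)"
    using a_pos ref_dist_nonneg[of xs z] ref_dist_nonneg[of ys z] ref_shift_nonneg[of xs]
      ref_shift_nonneg[of ys]
    by (simp add: algebra_simps)
  finally show ?thesis .
qed

text \<open>Averaging over the first \<open>g\<close> steps trades the dependence on the starting point for a factor \<open>a ^ g\<close>.\<close>
lemma path_expect_defect_drop_le: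
  assumes xs: "\<forall>i\<in>{1..N}. xs i \<in> Kp i" and ys: "\<forall>i\<in>{1..N}. ys i \<in> Kp i"
  shows "path_expect w p (g + Suc (Suc n)) x (\<lambda>es. defect xs ys (drop g es)) \<le>
     3 * a ^ Suc n * (a ^ g * (ref_dist xs x + ref_dist ys x)
       + (ref_shift xs + ref_shift ys) * (1 / (1 - a) + 1))"
proof -
  let ?Dx = "ref_dist xs" and ?Dy = "ref_dist ys" and ?c = "ref_shift xs + ref_shift ys"
  let ?S = "\<Sum>i<g. a ^ i"
  have S: "?S \<le> 1 / (1 - a)"
    using a_pos a_less_1 by (simp add: sum_gp_strict divide_right_mono)
  have "path_expect w p (g + Suc (Suc n)) x (\<lambda>es. defect xs ys (drop g es))
      \<le> path_expect w p g x (\<lambda>us. 3 * a ^ Suc n * (?Dx (apply_word w us x) + ?Dy (apply_word w us x) + ?c))"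
    unfolding path_expect_append
    using path_expect_defect_le[OF xs ys] by (intro path_expect_mono) (simp add: add.assoc)
  also have "\<dots> = 3 * a ^ Suc n * (path_expect w p g x (\<lambda>us. ?Dx (apply_word w us x))
      + path_expect w p g x (\<lambda>us. ?Dy (apply_word w us x)) + ?c)"
    by (simp add: path_expect_cmult path_expect_add path_expect_const)
  also have "\<dots> \<le> 3 * a ^ Suc n * ((a ^ g * ?Dx x + ref_shift xs * ?S) + (a ^ g * ?Dy x + ref_shift ys * ?S) + ?c)"
    using path_expect_ref_dist_le[OF xs, of g x] path_expect_ref_dist_le[OF ys, of g x] a_pos
    by (intro mult_left_mono) auto
  also have "\<dots> \<le> 3 * a ^ Suc n * (a ^ g * (?Dx x + ?Dy x) + ?c * (1 / (1 - a) + 1))"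
    using mult_left_mono[OF S ref_shift_nonneg[of xs]] mult_left_mono[OF S ref_shift_nonneg[of ys]] a_pos
    by (intro mult_left_mono) (auto simp: algebra_simps add_divide_distrib)
  finally show ?thesis .
qed

end

definition window :: "(int \<Rightarrow> 'e) \<Rightarrow> nat \<Rightarrow> 'e list" where
  "window \<sigma> n = map (\<lambda>k. \<sigma> (int k - int n)) [0..<Suc n]"

lemma length_window[simp]: "length (window \<sigma> n) = Suc n"
  by (simp add: window_def)

lemma nth_window: "k < Suc n \<Longrightarrow> window \<sigma> n ! k = \<sigma> (int k - int n)"
  unfolding window_def by (simp del: upt_Suc)

lemma window_0: "window \<sigma> 0 = [\<sigma> 0]"
  by (simp add: window_def)

lemma window_Suc: "window \<sigma> (Suc n) = \<sigma> (- int (Suc n)) # window \<sigma> n"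
  by (rule nth_equalityI) (auto simp: nth_window nth_Cons split: nat.split)

lemma hd_window: "hd (window \<sigma> n) = \<sigma> (- int n)"
  by (simp add: window_def upt_conv_Cons del: upt_Suc)

lemma tl_window: "tl (window \<sigma> (Suc n)) = window \<sigma> n"
  by (simp add: window_Suc)

lemma window_cong: "(\<And>j. - int n \<le> j \<Longrightarrow> j \<le> 0 \<Longrightarrow> \<sigma> j = \<sigma>' j) \<Longrightarrow> window \<sigma> n = window \<sigma>' n"
  unfolding window_def by (auto intro!: map_cong)

lemma drop_window: "n \<le> M \<Longrightarrow> drop (M - n) (window \<sigma> M) = window \<sigma> n"
  by (rule nth_equalityI) (auto simp: nth_window)

lemma mem_cyl_iff_window: "length es = Suc M \<Longrightarrow> \<sigma> \<in> cyl (- int M) es \<longleftrightarrow> window \<sigma> M = es"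
  by (auto simp: cyl_def nth_window list_eq_iff_nth_eq algebra_simps)

lemma wcomp_eq_apply_word: "wcomp w \<sigma> n z = apply_word w (window \<sigma> n) z"
  by (induction n arbitrary: z) (simp_all add: window_0 window_Suc)

lemma (in cms_system) Y_eq_Y_word: "Y ii w zs \<sigma> n = Y_word zs (window \<sigma> n)"
  unfolding Y_def Y_word_def by (simp add: wcomp_eq_apply_word hd_window)

lemma (in cms_system) defect_window:
  "defect xs ys (window \<sigma> (Suc n)) = dist (Y ii w xs \<sigma> (Suc n)) (Y ii w xs \<sigma> n)
     + dist (Y ii w ys \<sigma> (Suc n)) (Y ii w ys \<sigma> n) + dist (Y ii w xs \<sigma> n) (Y ii w ys \<sigma> n)"
  unfolding defect_def Y_eq_Y_word tl_window ..

lemma window_event_eq_UN_cyl: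
  assumes "n \<le> M"
  shows "{\<sigma>. P (window \<sigma> n)} = (\<Union>es\<in>{es\<in>words (Suc M). P (drop (M - n) es)}. cyl (- int M) es)"
proof (intro equalityI subsetI)
  fix \<sigma> assume "\<sigma> \<in> {\<sigma>. P (window \<sigma> n)}"
  then have "window \<sigma> M \<in> {es\<in>words (Suc M). P (drop (M - n) es)}"
    by (simp add: words_def drop_window[OF assms])
  moreover have "\<sigma> \<in> cyl (- int M) (window \<sigma> M)" by (simp add: mem_cyl_iff_window)
  ultimately show "\<sigma> \<in> (\<Union>es\<in>{es\<in>words (Suc M). P (drop (M - n) es)}. cyl (- int M) es)" by blast
qed (auto simp: words_def mem_cyl_iff_window drop_window[OF assms])

lemma cyl_in_Asig: "es \<noteq> [] \<Longrightarrow> cyl m es \<in> Asig m"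
  unfolding Asig_def by auto

lemma window_event_in_Asig:
  fixes P :: "'e::finite list \<Rightarrow> bool"
  assumes "n \<le> M"
  shows "{\<sigma>. P (window \<sigma> n)} \<in> Asig (- int M)"
proof -
  let ?G = "{cyl (- int M) es | es :: 'e list. es \<noteq> []}"
  have Asig: "Asig (- int M) = sets (sigma UNIV ?G)" by (simp add: Asig_def)
  have "cyl (- int M) es \<in> sets (sigma UNIV ?G)" if "es \<in> words (Suc M)" for es
    using that unfolding Asig[symmetric] by (intro cyl_in_Asig) (auto simp: words_def)
  then have "(\<Union>es\<in>{es\<in>words (Suc M). P (drop (M - n) es)}. cyl (- int M) es) \<in> sets (sigma UNIV ?G)"
    by (intro sets.finite_UN finite_subset[OF _ finite_words]) auto
  then show ?thesis unfolding Asig window_event_eq_UN_cyl[OF assms] .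
qed

lemma (in prob_weights) emeasure_Pm_window_event:
  assumes "n \<le> M"
  shows "emeasure (Pm w p (- int M) x) {\<sigma>. P (window \<sigma> n)} =
     (\<Sum>es\<in>{es\<in>words (Suc M). P (drop (M - n) es)}. pweight w p es x)"
proof -
  let ?S = "{es\<in>words (Suc M). P (drop (M - n) es)}" and ?P = "Pm w p (- int M) x"
  interpret prob_space ?P by (rule prob_space_Pm)
  have ne: "es \<noteq> []" if "es \<in> ?S" for es
    using that by (auto simp: words_def)
  have cyl: "cyl (- int M) es \<in> sets ?P" if "es \<in> ?S" for es
    unfolding sets_Pm using ne[OF that] by (rule cyl_in_Asig)
  have "disjoint_family_on (cyl (- int M)) ?S"
    by (auto simp: disjoint_family_on_def words_def mem_cyl_iff_window)
  moreover have "cyl (- int M) ` ?S \<subseteq> sets ?P" using cyl by blast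
  ultimately have "emeasure ?P {\<sigma>. P (window \<sigma> n)} = (\<Sum>es\<in>?S. emeasure ?P (cyl (- int M) es))"
    unfolding window_event_eq_UN_cyl[OF assms]
    by (intro sum_emeasure[symmetric] finite_subset[OF _ finite_words]) auto
  also have "\<dots> = (\<Sum>es\<in>?S. ennreal (pweight w p es x))"
    using ne by (intro sum.cong refl) (simp add: emeasure_eq_measure measure_Pm_cyl)
  finally show ?thesis by (simp add: pweight_nonneg)
qed

lemma dprime_eq_half_power:
  assumes "s \<noteq> t"
  obtains G where "dprime s t = (1/2) ^ G" and "\<And>j. \<bar>j\<bar> < int G \<Longrightarrow> s j = t j"
proof -
  obtain j0 where j0: "s j0 \<noteq> t j0" using assms by blast
  let ?P = "\<lambda>k::nat. \<forall>j::int. \<bar>j\<bar> < int k \<longrightarrow> s j = t j"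
  have bound: "k \<le> nat \<bar>j0\<bar>" if "?P k" for k
  proof (rule ccontr)
    assume "\<not> k \<le> nat \<bar>j0\<bar>"
    then show False using that j0 by simp
  qed
  have "?P (Greatest ?P)" by (rule GreatestI_nat[where k=0, OF _ bound]) simp_all
  moreover have "dprime s t = (1/2) ^ Greatest ?P" unfolding dprime_def using assms by simp
  ultimately show ?thesis using that by blast
qed

lemma dprime_less_imp_eq:
  assumes "dprime s t < (1/2) ^ K" "\<bar>j\<bar> \<le> int K"
  shows "s j = t j"
proof (cases "s = t")
  case False
  then obtain G where G: "dprime s t = (1/2) ^ G" "\<And>j. \<bar>j\<bar> < int G \<Longrightarrow> s j = t j"
    using dprime_eq_half_power[OF False] by blast
  then have "K < G" using assms(1) by simp
  then show ?thesis using G(2) assms(2) by simp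
qed simp

context
  fixes f :: "nat \<Rightarrow> 'a::complete_space" and b :: real and k :: nat
  assumes b: "0 < b" "b < 1" and increments: "\<And>n. k \<le> n \<Longrightarrow> dist (f (Suc n)) (f n) \<le> b ^ n"
begin

lemma dist_le_geometric_tail:
  assumes "k \<le> n" "n \<le> m"
  shows "dist (f m) (f n) \<le> b ^ n / (1 - b)"
proof -
  have "dist (f (n + d)) (f n) \<le> (b ^ n - b ^ (n + d)) / (1 - b)" for d
  proof (induction d)
    case (Suc d)
    have "dist (f (n + Suc d)) (f n) \<le> b ^ (n + d) + (b ^ n - b ^ (n + d)) / (1 - b)"
      using dist_triangle[of "f (Suc (n + d))" "f n" "f (n + d)"] increments[of "n + d"] assms(1) Suc
      by simp
    also have "\<dots> = (b ^ n - b ^ (n + Suc d)) / (1 - b)" using b by (simp add: field_simps)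
    finally show ?case .
  qed simp
  moreover obtain d where "m = n + d" using le_Suc_ex[OF assms(2)] by blast
  moreover have "(b ^ n - b ^ (n + d)) / (1 - b) \<le> b ^ n / (1 - b)" using b by (simp add: divide_right_mono)
  ultimately show ?thesis by (metis order.trans)
qed

lemma convergent_geometric_increments: "convergent f"
proof -
  have "Cauchy f"
  proof (rule metric_CauchyI)
    fix e :: real assume "0 < e"
    have "(\<lambda>n. b ^ n / (1 - b)) \<longlonglongrightarrow> 0" using b by (intro tendsto_divide_zero LIMSEQ_power_zero) auto
    then have "eventually (\<lambda>n. b ^ n / (1 - b) < e) sequentially"
      using \<open>0 < e\<close> by (rule order_tendstoD(2))
    then obtain M0 where M0: "\<And>n. n \<ge> M0 \<Longrightarrow> b ^ n / (1 - b) < e"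
      by (auto simp: eventually_sequentially)
    have "dist (f m) (f n) < e" if "max M0 k \<le> m" "max M0 k \<le> n" for m n
      using dist_le_geometric_tail[of n m] dist_le_geometric_tail[of m n] M0[of n] M0[of m] that
      by (cases "n \<le> m") (auto simp: dist_commute)
    then show "\<exists>M. \<forall>m\<ge>M. \<forall>n\<ge>M. dist (f m) (f n) < e" by blast
  qed
  then show ?thesis by (simp add: Cauchy_convergent_iff)
qed

lemma dist_lim_le_geometric:
  assumes "k \<le> n"
  shows "dist (lim f) (f n) \<le> b ^ n / (1 - b)"
proof -
  have "(\<lambda>m. dist (f m) (f n)) \<longlonglongrightarrow> dist (lim f) (f n)"
    using convergent_geometric_increments by (intro tendsto_intros) (simp add: convergent_LIMSEQ_iff)
  then show ?thesis
    by (rule LIMSEQ_le_const2) (use dist_le_geometric_tail assms in auto)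
qed

end

lemma sums_geometric_from:
  fixes b :: real
  assumes "\<bar>b\<bar> < 1"
  shows "(\<lambda>n. if k \<le> n then c * b ^ n else 0) sums (c * b ^ k / (1 - b))"
proof -
  let ?f = "\<lambda>n. if k \<le> n then c * b ^ n else 0"
  have "(\<lambda>n. c * b ^ k * b ^ n) sums (c * b ^ k * (1 / (1 - b)))"
    using assms by (intro sums_mult geometric_sums) simp
  moreover have "(\<lambda>n. ?f (n + k)) = (\<lambda>n. c * b ^ k * b ^ n)"
    by (simp add: power_add mult_ac)
  ultimately have "(\<lambda>n. ?f (n + k)) sums (c * b ^ k / (1 - b))" by simp
  then have "?f sums (c * b ^ k / (1 - b) + (\<Sum>i<k. ?f i))"
    by (rule sums_iff_shift[THEN iffD1])
  then show ?thesis by simp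
qed

lemma Phi_mono: "B \<subseteq> B' \<Longrightarrow> Phi w p \<nu> B \<le> Phi w p \<nu> B'"
  unfolding Phi_def by (rule INF_superset_mono) auto

text \<open>Levels outside the range of \<open>h\<close> are covered by \<open>{}\<close>.\<close>
lemma Phi_le_suminf_reindex:
  assumes h: "strict_mono h" and A: "\<And>n. A n \<in> Asig (- int (h n))" and B: "B \<subseteq> (\<Union>n. A n)"
  shows "Phi w p \<nu> B \<le> (\<Sum>n. Phim w p \<nu> (- int (h n)) (A n))"
proof -
  define A' where "A' j = (if j \<in> range h then A (the_inv h j) else {})" for j
  have inj: "inj h" using strict_mono_imp_inj_on[OF h] .
  have A'_h: "A' (h n) = A n" for n unfolding A'_def using the_inv_f_f[OF inj] by simp
  have "A' j \<in> Asig (- int j)" for j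
    using A A'_h by (cases "j \<in> range h") (auto simp: A'_def Asig_def intro: sigma_sets.Empty)
  moreover have "B \<subseteq> (\<Union>j. A' j)" using B A'_h by blast
  ultimately have "Phi w p \<nu> B \<le> (\<Sum>j. Phim w p \<nu> (- int j) (A' j))"
    unfolding Phi_def by (intro INF_lower) auto
  also have "\<dots> = (\<Sum>n. Phim w p \<nu> (- int (h n)) (A' (h n)))"
    by (rule suminf_mono_reindex[OF h, symmetric]) (simp add: A'_def Phim_def)
  also have "\<dots> = (\<Sum>n. Phim w p \<nu> (- int (h n)) (A n))"
    by (simp add: A'_h)
  finally show ?thesis .
qed

section \<open>Sets of good sequences\<close>

locale cms_coding = cms_system N ii tt Kp w p a
  for N and ii tt :: "'e::finite \<Rightarrow> nat" and Kp :: "nat \<Rightarrow> 'a::complete_space set" and w p a +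
  fixes xs ys :: "nat \<Rightarrow> 'a" and \<nu> :: "'a measure"
  assumes xs_in: "\<forall>i\<in>{1..N}. xs i \<in> Kp i" and ys_in: "\<forall>i\<in>{1..N}. ys i \<in> Kp i"
    and prob_space_nu: "prob_space \<nu>" and sets_nu: "sets \<nu> = sets borel"
begin

definition \<beta> :: real where "\<beta> = sqrt a"

lemma \<beta>_pos: "0 < \<beta>" and \<beta>_less_1: "\<beta> < 1" and a_eq_\<beta>: "a = \<beta> * \<beta>"
  using a_pos a_less_1 unfolding \<beta>_def by simp_all

definition ref_dists :: "'a \<Rightarrow> real" where
  "ref_dists x = ref_dist xs x + ref_dist ys x"

definition drift_const :: real where
  "drift_const = 3 * ((ref_shift xs + ref_shift ys) * (1 / (1 - a) + 1))"

lemma ref_dists_nonneg: "0 \<le> ref_dists x"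
  unfolding ref_dists_def using ref_dist_nonneg[of xs x] ref_dist_nonneg[of ys x] by simp

lemma drift_const_nonneg: "0 \<le> drift_const"
  unfolding drift_const_def using ref_shift_nonneg[of xs] ref_shift_nonneg[of ys] a_less_1 by simp

definition large_defect :: "nat \<Rightarrow> (int \<Rightarrow> 'e) set" where
  "large_defect n = {\<sigma>. \<beta> ^ n < defect xs ys (window \<sigma> (Suc n))}"

definition good :: "nat \<Rightarrow> (int \<Rightarrow> 'e) set" where
  "good k = {\<sigma>. \<forall>n\<ge>k. defect xs ys (window \<sigma> (Suc n)) \<le> \<beta> ^ n}"

lemma div_beta_power_le:
  assumes X: "0 \<le> X" and c: "0 \<le> c"
  shows "3 * a ^ Suc n * (X + c) / \<beta> ^ n \<le> 3 * X + 3 * c * \<beta> ^ n"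
proof -
  have \<beta>n: "0 < \<beta> ^ n" "\<beta> ^ n \<le> 1" using \<beta>_pos \<beta>_less_1 by (auto simp: power_le_one)
  have "a ^ Suc n \<le> a ^ n" using a_pos a_less_1 by (intro power_decreasing) auto
  also have "\<dots> = \<beta> ^ n * \<beta> ^ n" by (metis a_eq_\<beta> power_mult_distrib)
  finally have "3 * a ^ Suc n * (X + c) / \<beta> ^ n \<le> 3 * (\<beta> ^ n * \<beta> ^ n) * (X + c) / \<beta> ^ n"
    using X c \<beta>n by (intro divide_right_mono mult_right_mono mult_left_mono) auto
  also have "\<dots> = (3 * \<beta> ^ n * X + 3 * c * \<beta> ^ n) * \<beta> ^ n / \<beta> ^ n"
    by (simp add: algebra_simps)
  also have "\<dots> = 3 * \<beta> ^ n * X + 3 * c * \<beta> ^ n" using \<beta>_pos by simp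
  also have "3 * \<beta> ^ n * X \<le> 3 * X" using \<beta>n X by (simp add: mult_left_le_one_le)
  finally show ?thesis by simp
qed

lemma prob_large_defect_le:
  "(\<Sum>es\<in>{es\<in>words (Suc (g + Suc n)). \<beta> ^ n < defect xs ys (drop g es)}. pweight w p es x)
     \<le> 3 * a ^ g * ref_dists x + drift_const * \<beta> ^ n"
proof -
  have "(\<Sum>es\<in>{es\<in>words (Suc (g + Suc n)). \<beta> ^ n < defect xs ys (drop g es)}. pweight w p es x)
      \<le> path_expect w p (g + Suc (Suc n)) x (\<lambda>es. defect xs ys (drop g es)) / \<beta> ^ n"
    using path_expect_Markov_inequality[of "\<beta> ^ n"] \<beta>_pos defect_nonneg by simp
  also have "\<dots> \<le> 3 * a ^ Suc n * (a ^ g * ref_dists x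
      + (ref_shift xs + ref_shift ys) * (1 / (1 - a) + 1)) / \<beta> ^ n"
    using path_expect_defect_drop_le[OF xs_in ys_in, of g n x] \<beta>_pos
    by (intro divide_right_mono) (simp_all add: ref_dists_def)
  also have "\<dots> \<le> 3 * (a ^ g * ref_dists x) + 3 * ((ref_shift xs + ref_shift ys) * (1 / (1 - a) + 1)) * \<beta> ^ n"
    using ref_dists_nonneg[of x] a_pos a_less_1 ref_shift_nonneg[of xs] ref_shift_nonneg[of ys]
    by (intro div_beta_power_le) simp_all
  also have "\<dots> = 3 * a ^ g * ref_dists x + drift_const * \<beta> ^ n"
    by (simp add: drift_const_def)
  finally show ?thesis .
qed

lemma emeasure_large_defect_le:
  "emeasure (Pm w p (- int (g + Suc n)) x) (large_defect n)
     \<le> ennreal (min 1 (3 * a ^ g * ref_dists x)) + ennreal (drift_const * \<beta> ^ n)"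
proof -
  let ?P = "Pm w p (- int (g + Suc n)) x"
  let ?S = "\<Sum>es\<in>{es\<in>words (Suc (g + Suc n)). \<beta> ^ n < defect xs ys (drop g es)}. pweight w p es x"
  interpret prob_space ?P by (rule prob_space_Pm)
  have eq: "emeasure ?P (large_defect n) = ennreal ?S"
    unfolding large_defect_def by (subst emeasure_Pm_window_event) simp_all
  then have "?S \<le> 1" using emeasure_le_1[of "large_defect n"] pweight_nonneg
    by (simp add: sum_nonneg)
  moreover have "0 \<le> drift_const * \<beta> ^ n" using drift_const_nonneg \<beta>_pos by simp
  ultimately have "?S \<le> min 1 (3 * a ^ g * ref_dists x) + drift_const * \<beta> ^ n"
    using prob_large_defect_le[where g=g and n=n and x=x] by linarith
  then show ?thesis
    using eq drift_const_nonneg \<beta>_pos ref_dists_nonneg[of x] a_pos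
    by (simp add: ennreal_plus[symmetric] ennreal_leI del: ennreal_plus)
qed

text \<open>Truncating at \<open>1\<close> costs nothing for probabilities, and \<open>ref_dists\<close> need not be \<open>\<nu>\<close>-integrable.\<close>
definition start_mass :: "nat \<Rightarrow> ennreal" where
  "start_mass g = (\<integral>\<^sup>+x. ennreal (min 1 (3 * a ^ g * ref_dists x)) \<partial>\<nu>)"

lemma borel_measurable_ref_dists[measurable]: "ref_dists \<in> borel_measurable \<nu>"
proof -
  have [measurable]: "(\<lambda>x. indicator (Kp j) x * dist x (zs j)) \<in> borel_measurable borel"
    if "j \<in> {1..N}" for j and zs :: "nat \<Rightarrow> 'a"
  proof -
    have [measurable]: "(\<lambda>x. dist x (zs j)) \<in> borel_measurable borel"
      by (intro borel_measurable_continuous_onI continuous_intros)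
    show ?thesis using Kp_borel[OF that] by measurable
  qed
  show ?thesis
    unfolding ref_dists_def ref_dist_def measurable_cong_sets[OF sets_nu refl] by measurable
qed

lemma start_mass_tendsto_0: "start_mass \<longlonglongrightarrow> 0"
proof -
  interpret prob_space \<nu> by (rule prob_space_nu)
  have "(\<lambda>g. min 1 (3 * a ^ g * ref_dists x)) \<longlonglongrightarrow> min 1 (3 * 0 * ref_dists x)" for x
    using a_pos a_less_1 by (intro tendsto_intros) simp
  then have "(\<lambda>g. ennreal (min 1 (3 * a ^ g * ref_dists x))) \<longlonglongrightarrow> 0" for x
    using tendsto_ennrealI by fastforce
  then have "start_mass \<longlonglongrightarrow> (\<integral>\<^sup>+x. 0 \<partial>\<nu>)"
    unfolding start_mass_def[abs_def]
    by (intro nn_integral_dominated_convergence[where w="\<lambda>_. 1"]) (auto simp: emeasure_space_1)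
  then show ?thesis by simp
qed

definition burn_in :: "nat \<Rightarrow> nat" where
  "burn_in n = (LEAST g. start_mass g \<le> ennreal (\<beta> ^ n))"

lemma start_mass_burn_in_le: "start_mass (burn_in n) \<le> ennreal (\<beta> ^ n)"
proof -
  have "eventually (\<lambda>g. start_mass g < ennreal (\<beta> ^ n)) sequentially"
    using \<beta>_pos by (intro order_tendstoD(2)[OF start_mass_tendsto_0]) simp
  then obtain g where "start_mass g \<le> ennreal (\<beta> ^ n)"
    by (auto simp: eventually_sequentially intro: less_imp_le)
  then show ?thesis unfolding burn_in_def by (rule LeastI)
qed

lemma burn_in_mono: "burn_in n \<le> burn_in (Suc n)"
proof -
  have "\<beta> ^ Suc n \<le> \<beta> ^ n" using \<beta>_pos \<beta>_less_1 by (intro power_decreasing) auto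
  then have "start_mass (burn_in (Suc n)) \<le> ennreal (\<beta> ^ n)"
    using start_mass_burn_in_le[of "Suc n"] by (meson ennreal_leI order_trans)
  then show ?thesis unfolding burn_in_def[of n] by (rule Least_le)
qed

text \<open>The event \<open>large_defect n\<close> is covered at level \<open>-cover_level n\<close>: far enough in the past for
  the starting point to be forgotten up to \<open>\<beta> ^ n\<close>.\<close>
definition cover_level :: "nat \<Rightarrow> nat" where
  "cover_level n = burn_in n + Suc n"

lemma strict_mono_cover_level: "strict_mono cover_level"
  unfolding cover_level_def by (rule strict_mono_Suc_iff[THEN iffD2]) (simp add: burn_in_mono le_imp_less_Suc)

lemma large_defect_in_Asig: "large_defect n \<in> Asig (- int (cover_level n))"
  unfolding large_defect_def cover_level_def by (rule window_event_in_Asig) simp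

lemma Phim_large_defect_le:
  "Phim w p \<nu> (- int (cover_level n)) (large_defect n) \<le> ennreal ((1 + drift_const) * \<beta> ^ n)"
proof -
  interpret prob_space \<nu> by (rule prob_space_nu)
  have "Phim w p \<nu> (- int (cover_level n)) (large_defect n)
      \<le> (\<integral>\<^sup>+x. ennreal (min 1 (3 * a ^ burn_in n * ref_dists x)) + ennreal (drift_const * \<beta> ^ n) \<partial>\<nu>)"
    unfolding Phim_def cover_level_def by (intro nn_integral_mono emeasure_large_defect_le)
  also have "\<dots> = start_mass (burn_in n) + ennreal (drift_const * \<beta> ^ n)"
    unfolding start_mass_def by (subst nn_integral_add) (auto simp: emeasure_space_1)
  also have "\<dots> \<le> ennreal (\<beta> ^ n) + ennreal (drift_const * \<beta> ^ n)"
    using start_mass_burn_in_le by (rule add_right_mono)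
  also have "\<dots> = ennreal ((1 + drift_const) * \<beta> ^ n)"
    using drift_const_nonneg \<beta>_pos by (simp add: ennreal_plus[symmetric] distrib_right del: ennreal_plus)
  finally show ?thesis .
qed

lemma Phi_not_good_le: "Phi w p \<nu> (UNIV - good k) \<le> ennreal ((1 + drift_const) * \<beta> ^ k / (1 - \<beta>))"
proof -
  let ?A = "\<lambda>n. if k \<le> n then large_defect n else {}"
  have "?A n \<in> Asig (- int (cover_level n))" for n
    using large_defect_in_Asig by (simp add: Asig_def sigma_sets.Empty)
  moreover have "UNIV - good k \<subseteq> (\<Union>n. ?A n)"
  proof
    fix \<sigma> assume "\<sigma> \<in> UNIV - good k"
    then obtain n where "k \<le> n" "\<sigma> \<in> large_defect n" by (auto simp: good_def large_defect_def not_le)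
    then show "\<sigma> \<in> (\<Union>n. ?A n)" by (intro UN_I[of n]) auto
  qed
  ultimately have "Phi w p \<nu> (UNIV - good k) \<le> (\<Sum>n. Phim w p \<nu> (- int (cover_level n)) (?A n))"
    by (rule Phi_le_suminf_reindex[OF strict_mono_cover_level])
  also have "\<dots> \<le> (\<Sum>n. ennreal (if k \<le> n then (1 + drift_const) * \<beta> ^ n else 0))"
    using Phim_large_defect_le by (intro suminf_le) (auto simp: Phim_def)
  also have "\<dots> = ennreal ((1 + drift_const) * \<beta> ^ k / (1 - \<beta>))"
    using sums_geometric_from[of \<beta> k "1 + drift_const"] drift_const_nonneg \<beta>_pos \<beta>_less_1
    by (subst suminf_ennreal2) (auto simp: sums_iff)
  finally show ?thesis .
qed

lemma Phi_not_good_tendsto_0: "(\<lambda>k. Phi w p \<nu> (UNIV - good k)) \<longlonglongrightarrow> 0"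
proof (rule tendsto_sandwich[OF _ _ tendsto_const])
  have "(\<lambda>k. (1 + drift_const) * \<beta> ^ k / (1 - \<beta>)) \<longlonglongrightarrow> (1 + drift_const) * 0 / (1 - \<beta>)"
    using \<beta>_pos \<beta>_less_1 by (intro tendsto_intros) auto
  then show "(\<lambda>k. ennreal ((1 + drift_const) * \<beta> ^ k / (1 - \<beta>))) \<longlonglongrightarrow> 0"
    using tendsto_ennrealI by fastforce
qed (auto intro!: always_eventually Phi_not_good_le)

lemma Phi_not_Union_good: "Phi w p \<nu> (UNIV - (\<Union>k. good k)) = 0"
proof -
  have "Phi w p \<nu> (UNIV - (\<Union>k. good k)) \<le> 0"
    by (rule LIMSEQ_le_const[OF Phi_not_good_tendsto_0]) (auto intro: Phi_mono)
  then show ?thesis by simp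
qed

lemma good_mono: "good k \<subseteq> good (Suc k)"
  unfolding good_def by auto

lemma dprime_closed_good: "dprime_closed (good k)"
  unfolding dprime_closed_def
proof (intro allI impI)
  fix s \<sigma> assume s: "\<forall>i. s i \<in> good k" and lim: "(\<lambda>i. dprime (s i) \<sigma>) \<longlonglongrightarrow> 0"
  have "defect xs ys (window \<sigma> (Suc n)) \<le> \<beta> ^ n" if "k \<le> n" for n
  proof -
    have "eventually (\<lambda>i. dprime (s i) \<sigma> < (1/2) ^ Suc n) sequentially"
      by (rule order_tendstoD(2)[OF lim]) simp
    then obtain i where i: "dprime (s i) \<sigma> < (1/2) ^ Suc n" by (auto simp: eventually_sequentially)
    then have "window (s i) (Suc n) = window \<sigma> (Suc n)"
      by (intro window_cong dprime_less_imp_eq[OF i]) auto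
    moreover have "defect xs ys (window (s i) (Suc n)) \<le> \<beta> ^ n" using s that unfolding good_def by blast
    ultimately show ?thesis by simp
  qed
  then show "\<sigma> \<in> good k" unfolding good_def by blast
qed

lemma good_dist_Y_le:
  assumes "\<sigma> \<in> good k" "k \<le> n"
  shows "dist (Y ii w xs \<sigma> (Suc n)) (Y ii w xs \<sigma> n) \<le> \<beta> ^ n"
    and "dist (Y ii w ys \<sigma> (Suc n)) (Y ii w ys \<sigma> n) \<le> \<beta> ^ n"
    and "dist (Y ii w xs \<sigma> n) (Y ii w ys \<sigma> n) \<le> \<beta> ^ n"
proof -
  have "dist (Y ii w xs \<sigma> (Suc n)) (Y ii w xs \<sigma> n) + dist (Y ii w ys \<sigma> (Suc n)) (Y ii w ys \<sigma> n)
      + dist (Y ii w xs \<sigma> n) (Y ii w ys \<sigma> n) \<le> \<beta> ^ n"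
    using assms unfolding good_def defect_window by blast
  then show "dist (Y ii w xs \<sigma> (Suc n)) (Y ii w xs \<sigma> n) \<le> \<beta> ^ n"
    and "dist (Y ii w ys \<sigma> (Suc n)) (Y ii w ys \<sigma> n) \<le> \<beta> ^ n"
    and "dist (Y ii w xs \<sigma> n) (Y ii w ys \<sigma> n) \<le> \<beta> ^ n"
    using zero_le_dist[of "Y ii w xs \<sigma> (Suc n)" "Y ii w xs \<sigma> n"]
      zero_le_dist[of "Y ii w ys \<sigma> (Suc n)" "Y ii w ys \<sigma> n"] zero_le_dist[of "Y ii w xs \<sigma> n" "Y ii w ys \<sigma> n"]
    by linarith+
qed

lemma convergent_Y_good: "\<sigma> \<in> good k \<Longrightarrow> convergent (Y ii w xs \<sigma>)" "\<sigma> \<in> good k \<Longrightarrow> convergent (Y ii w ys \<sigma>)"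
  using convergent_geometric_increments[OF \<beta>_pos \<beta>_less_1] good_dist_Y_le by blast+

lemma dist_lim_Y_good_le:
  assumes "\<sigma> \<in> good k" "k \<le> n"
  shows "dist (lim (Y ii w xs \<sigma>)) (Y ii w xs \<sigma> n) \<le> \<beta> ^ n / (1 - \<beta>)"
    and "dist (lim (Y ii w ys \<sigma>)) (Y ii w ys \<sigma> n) \<le> \<beta> ^ n / (1 - \<beta>)"
  using dist_lim_le_geometric[OF \<beta>_pos \<beta>_less_1] good_dist_Y_le assms by blast+

lemma lim_Y_eq_good:
  assumes "\<sigma> \<in> good k"
  shows "lim (Y ii w xs \<sigma>) = lim (Y ii w ys \<sigma>)"
proof -
  let ?d = "dist (lim (Y ii w xs \<sigma>)) (lim (Y ii w ys \<sigma>))"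
  have bound: "?d \<le> (2 / (1 - \<beta>) + 1) * \<beta> ^ n" if "k \<le> n" for n
  proof -
    have "?d \<le> dist (lim (Y ii w xs \<sigma>)) (Y ii w xs \<sigma> n) + dist (Y ii w xs \<sigma> n) (Y ii w ys \<sigma> n)
        + dist (lim (Y ii w ys \<sigma>)) (Y ii w ys \<sigma> n)"
      using dist_triangle[of "lim (Y ii w xs \<sigma>)" "lim (Y ii w ys \<sigma>)" "Y ii w xs \<sigma> n"]
        dist_triangle[of "Y ii w xs \<sigma> n" "lim (Y ii w ys \<sigma>)" "Y ii w ys \<sigma> n"]
      by (simp add: dist_commute)
    also have "\<dots> \<le> (2 / (1 - \<beta>) + 1) * \<beta> ^ n"
      using dist_lim_Y_good_le[OF assms that] good_dist_Y_le(3)[OF assms that] by (simp add: field_simps)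
    finally show ?thesis .
  qed
  have "(\<lambda>n. (2 / (1 - \<beta>) + 1) * \<beta> ^ n) \<longlonglongrightarrow> (2 / (1 - \<beta>) + 1) * 0"
    using \<beta>_pos \<beta>_less_1 by (intro tendsto_intros) auto
  then have "?d \<le> (2 / (1 - \<beta>) + 1) * 0"
    by (rule LIMSEQ_le_const) (use bound in auto)
  then show ?thesis by simp
qed

definition holder_exponent :: real where
  "holder_exponent = ln \<beta> / ln (1/2)"

definition holder_const :: real where
  "holder_const = 2 / (\<beta> * (1 - \<beta>))"

lemma holder_exponent_pos: "0 < holder_exponent"
  unfolding holder_exponent_def using \<beta>_pos \<beta>_less_1 by (intro divide_neg_neg) auto

lemma holder_const_pos: "0 < holder_const"
  unfolding holder_const_def using \<beta>_pos \<beta>_less_1 by simp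

lemma half_power_powr_holder_exponent: "((1/2) ^ n) powr holder_exponent = \<beta> ^ n"
proof -
  have \<beta>: "(1/2 :: real) powr holder_exponent = \<beta>"
    unfolding holder_exponent_def powr_def using \<beta>_pos by simp
  have "((1/2) ^ n) powr holder_exponent = ((1/2) powr real n) powr holder_exponent"
    by (simp add: powr_realpow)
  also have "\<dots> = ((1/2) powr holder_exponent) powr real n"
    by (simp add: powr_powr mult.commute)
  finally show ?thesis using \<beta> \<beta>_pos by (simp add: powr_realpow)
qed

lemma holder_lim_Y_good:
  assumes \<sigma>: "\<sigma> \<in> good k" and \<sigma>': "\<sigma>' \<in> good k" and d: "dprime \<sigma> \<sigma>' \<le> (1/2) ^ Suc k"
  shows "dist (lim (Y ii w xs \<sigma>)) (lim (Y ii w xs \<sigma>')) \<le> holder_const * dprime \<sigma> \<sigma>' powr holder_exponent"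
proof (cases "\<sigma> = \<sigma>'")
  case False
  then obtain G where G: "dprime \<sigma> \<sigma>' = (1/2) ^ G" "\<And>j. \<bar>j\<bar> < int G \<Longrightarrow> \<sigma> j = \<sigma>' j"
    using dprime_eq_half_power by blast
  have "((1/2 :: real) ^ G \<le> (1/2) ^ Suc k) = (Suc k \<le> G)"
    by (rule power_decreasing_iff) auto
  then have "Suc k \<le> G" using d G(1) by simp
  then obtain n where n: "G = Suc n" "k \<le> n" by (metis Suc_le_D Suc_le_mono)
  have "window \<sigma> n = window \<sigma>' n"
    using n(1) by (intro window_cong G(2)) simp
  then have "Y ii w xs \<sigma> n = Y ii w xs \<sigma>' n" by (simp add: Y_eq_Y_word)
  then have "dist (lim (Y ii w xs \<sigma>)) (lim (Y ii w xs \<sigma>')) \<le> \<beta> ^ n / (1 - \<beta>) + \<beta> ^ n / (1 - \<beta>)"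
    using dist_triangle2[of "lim (Y ii w xs \<sigma>)" "lim (Y ii w xs \<sigma>')" "Y ii w xs \<sigma> n"]
      dist_lim_Y_good_le(1)[OF \<sigma> n(2)] dist_lim_Y_good_le(1)[OF \<sigma>' n(2)] by simp
  also have "\<dots> = 2 * \<beta> ^ n / (1 - \<beta>)" by simp
  also have "\<dots> = holder_const * \<beta> ^ G"
    unfolding holder_const_def n(1) using \<beta>_pos by simp
  finally show ?thesis by (simp add: G(1) half_power_powr_holder_exponent)
qed (simp add: dprime_def)

lemma convergent_lim_eq_Union_good:
  "\<sigma> \<in> (\<Union>k. good k) \<Longrightarrow>
     convergent (Y ii w xs \<sigma>) \<and> convergent (Y ii w ys \<sigma>) \<and> lim (Y ii w xs \<sigma>) = lim (Y ii w ys \<sigma>)"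
  using convergent_Y_good lim_Y_eq_good by blast

lemma holder_radius_good:
  "\<exists>\<delta>k>0. (\<forall>\<sigma>\<in>good k. convergent (Y ii w xs \<sigma>)) \<and>
     (\<forall>\<sigma>\<in>good k. \<forall>\<sigma>'\<in>good k. dprime \<sigma> \<sigma>' \<le> \<delta>k \<longrightarrow>
        dist (lim (Y ii w xs \<sigma>)) (lim (Y ii w xs \<sigma>')) \<le> holder_const * dprime \<sigma> \<sigma>' powr holder_exponent)"
proof (intro exI[of _ "(1/2) ^ Suc k"] conjI ballI impI)
  show "0 < (1/2 :: real) ^ Suc k" by simp
qed (simp_all add: convergent_Y_good holder_lim_Y_good)

end

theorem theorem1:
  fixes N :: nat and ii tt :: "'e::finite \<Rightarrow> nat" and Kp :: "nat \<Rightarrow> 'a::complete_space set"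
    and w :: "'e \<Rightarrow> 'a \<Rightarrow> 'a" and p :: "'e \<Rightarrow> 'a \<Rightarrow> real" and a \<delta> :: real
    and xs ys :: "nat \<Rightarrow> 'a" and \<nu> :: "'a measure"
  assumes "cms N ii tt Kp w p a"
    and "\<forall>e. dini_continuous_on (Kp (ii e)) (p e)"
    and "\<delta> > 0" and "\<forall>e. \<forall>x\<in>Kp (ii e). p e x \<ge> \<delta>"
    and "\<forall>i\<in>{1..N}. xs i \<in> Kp i \<and> ys i \<in> Kp i"
    and "prob_space \<nu>" and "sets \<nu> = sets borel"
  shows "(\<exists>B. Phi w p \<nu> B = 0 \<and> (\<forall>\<sigma>. \<sigma> \<notin> B \<longrightarrow> convergent (Y ii w xs \<sigma>)))
       \<and> (\<exists>B. Phi w p \<nu> B = 0 \<and> (\<forall>\<sigma>. \<sigma> \<notin> B \<longrightarrow>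
              convergent (Y ii w xs \<sigma>) \<and> convergent (Y ii w ys \<sigma>) \<and> lim (Y ii w xs \<sigma>) = lim (Y ii w ys \<sigma>)))
       \<and> (\<exists>Q :: nat \<Rightarrow> (int \<Rightarrow> 'e) set. \<exists>\<alpha> C :: real.
            (\<forall>k. dprime_closed (Q k)) \<and> (\<forall>k. Q k \<subseteq> Q (Suc k)) \<and>
            (\<lambda>k. Phi w p \<nu> (UNIV - Q k)) \<longlonglongrightarrow> 0 \<and> \<alpha> > 0 \<and> C > 0 \<and>
            (\<forall>k. \<exists>\<delta>k>0. (\<forall>\<sigma>\<in>Q k. convergent (Y ii w xs \<sigma>)) \<and>
               (\<forall>\<sigma>\<in>Q k. \<forall>\<sigma>'\<in>Q k. dprime \<sigma> \<sigma>' \<le> \<delta>k \<longrightarrow>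
                  dist (lim (Y ii w xs \<sigma>)) (lim (Y ii w xs \<sigma>')) \<le> C * dprime \<sigma> \<sigma>' powr \<alpha>)))"
proof -
  interpret cms_coding N ii tt Kp w p a xs ys \<nu>
    using assms(1,5-7) by (simp add: cms_coding_def cms_coding_axioms_def cms_system_def)
  show ?thesis
    using Phi_not_Union_good convergent_lim_eq_Union_good holder_radius_good dprime_closed_good good_mono
      Phi_not_good_tendsto_0 holder_exponent_pos holder_const_pos
    by (intro conjI exI[of _ "UNIV - (\<Union>k. good k)"] exI[of _ good]) blast+
qed

end
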